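(* Let $K\ge2$, $m\ge1$, $C>0$, let $\mathbf{y}\in[K]^m$, let $\mathbf{Q}\in\mathbb{R}^{m\times m}$ be a symmetric positive semidefinite kernel matrix on the labeled nodes and $Q_{t1},\dots,Q_{tm}$ the kernel values of a test node $t$. For each class $c\in[K]$ let $\mathbf{y}^c\in\{-1,1\}^m$ with $y_i^c=1$ iff $y_i=c$, and $y_i'^c=1$ iff $y_i=c$ (else $0$). Let $\hat c$ be the originally predicted class (defined below). Set $M^c_{u_i}=\sum_jC|Q_{ij}|-1$, $M^c_{v_i}=\sum_jC|Q_{ij}|+1$, $p^L=-C\sum_{i=1}^m|Q_{ti}|$, $p^U=C\sum_{i=1}^m|Q_{ti}|$. Consider the MILP $$M(\mathbf{y}):\ \min\ p_{\hat c}-p^*$$ over $p^*\in\mathbb{R}$, $\mathbf{p}\in\mathbb{R}^K$, $b_c\in\{0,1\}$ ($c\ne\hat c$), and for each $c\in[K]$: $\boldsymbol\alpha^c,\tilde{\mathbf{y}}^c,\mathbf{z}^c,\mathbf{u}^c,\mathbf{v}^c\in\mathbb{R}^m$, $\tilde{\mathbf{y}}'^c,\mathbf{s}^c,\mathbf{t}^c\in\{0,1\}^m$, $\mathbf{R}^c\in\mathbb{R}^{m\times m}$, subject to: $\sum_{i=1}^m\big(1-\sum_{c=1}^Ky_i'^c\tilde y_i'^c\big)\le\lfloor\epsilon m\rfloor$; $\sum_{c=1}^K\tilde y_i'^c=1$ for all $i\in[m]$; $\sum_{c\ne\hat c}b_c=1$; for all $c\ne\hat c$: $p^*\ge p_c$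 and $p^*\le p_c+(1-b_c)(p^U-p^L)$; for all $c\in[K]$: $p_c=\sum_{i=1}^mz_i^cQ_{ti}$; for all $c\in[K]$ and $i,j\in[m]$: $\sum_{j}R^c_{ij}Q_{ij}-1-u_i^c+v_i^c=0$, $-C(1+\tilde y^c_i)\le R^c_{ij}+z^c_j\le C(1+\tilde y^c_i)$, $-C(1-\tilde y^c_i)\le R^c_{ij}-z^c_j\le C(1-\tilde y^c_i)$; for all $c\in[K]$, $i\in[m]$: $-\alpha_i^c\le z_i^c\le\alpha_i^c$, $\alpha^c_i-C(1-\tilde y^c_i)\le z_i^c\le C(1+\tilde y_i^c)-\alpha_i^c$, $u_i^c\le M^c_{u_i}s_i^c$, $\alpha_i^c\le C(1-s_i^c)$, $v_i^c\le M^c_{v_i}t_i^c$, $\alpha_i^c\ge Ct_i^c$, $u_i^c\ge0$, $v_i^c\ge0$, $\tilde y_i^c=2\tilde y_i'^c-1$. Then the prediction for node $t$ is certifiably robust if the optimal value of $M(\mathbf{y})$ is greater than zero and non-robust otherwise; equivalently, the optimal value equals $\min_{\tilde{\mathbf{y}}\in\mathcal{A}(\mathbf{y})}\big(p_{\hat c}(\tilde{\mathbf{y}})-\max_{c\ne\hat c}p_c(\tilde{\mathbf{y}})\big)$.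
   Context: Multi-class classification by one-vs-all kernel SVMs. For a binary label vector $\mathbf{w}\in\{-1,1\}^m$, the bias-free kernel SVM dual is $D(\mathbf{w}):\ \min_{\boldsymbol\alpha}-\sum_i\alpha_i+\tfrac12\sum_{i,j}w_iw_j\alpha_i\alpha_jQ_{ij}$ s.t. $0\le\alpha_i\le C$; $\mathcal{S}(\mathbf{w})$ is its set of optimal solutions. For multi-class labels $\tilde{\mathbf{y}}\in[K]^m$ and $c\in[K]$, let $\tilde{\mathbf{y}}^c\in\{-1,1\}^m$ with $\tilde y^c_i=1$ iff $\tilde y_i=c$, and define the class score $p_c(\tilde{\mathbf{y}})=\sum_{i=1}^m\tilde y^c_i\alpha^c_iQ_{ti}$ for any $\boldsymbol\alpha^c\in\mathcal{S}(\tilde{\mathbf{y}}^c)$ (this value does not depend on the choice of optimal $\boldsymbol\alpha^c$). The predicted class is $\arg\max_cp_c$; $\hat c$ is the predicted class for the clean labels $\mathbf{y}$. The adversary chooses $\tilde{\mathbf{y}}\in\mathcal{A}(\mathbf{y})=\{\tilde{\mathbf{y}}\in[K]^m:\|\tilde{\mathbf{y}}-\mathbf{y}\|_0\le\lfloor\epsilon m\rfloor\}$, $\epsilon\in[0,1]$. The prediction is certifiably robust if $p_{\hat c}(\tilde{\mathbf{y}})-\max_{c\ne\hat c}p_c(\tilde{\mathbf{y}})>0$ for all $\tilde{\mathbf{y}}\in\mathcal{A}(\mathbf{y})$. *)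

theory Defs
  imports Complex_Main
begin

(* Indices: labeled nodes i \<in> {1..m}, classes c \<in> {1..K}.
   Vectors/matrices are functions on nat, only their values on the index ranges matter. *)

definition bin_label :: "(nat \<Rightarrow> nat) \<Rightarrow> nat \<Rightarrow> nat \<Rightarrow> real" where
  "bin_label y c i = (if y i = c then 1 else -1)"

definition onehot_label :: "(nat \<Rightarrow> nat) \<Rightarrow> nat \<Rightarrow> nat \<Rightarrow> real" where
  "onehot_label y c i = (if y i = c then 1 else 0)"

definition svm_dual_obj :: "nat \<Rightarrow> (nat \<Rightarrow> nat \<Rightarrow> real) \<Rightarrow> (nat \<Rightarrow> real) \<Rightarrow> (nat \<Rightarrow> real) \<Rightarrow> real" where
  "svm_dual_obj m Q w \<alpha> =
     - (\<Sum>i=1..m. \<alpha> i) + 1/2 * (\<Sum>i=1..m. \<Sum>j=1..m. w i * w j * \<alpha> i * \<alpha> j * Q i j)"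

definition svm_dual_feasible :: "nat \<Rightarrow> real \<Rightarrow> (nat \<Rightarrow> real) \<Rightarrow> bool" where
  "svm_dual_feasible m C \<alpha> \<longleftrightarrow> (\<forall>i\<in>{1..m}. 0 \<le> \<alpha> i \<and> \<alpha> i \<le> C)"

definition svm_opt_set :: "nat \<Rightarrow> real \<Rightarrow> (nat \<Rightarrow> nat \<Rightarrow> real) \<Rightarrow> (nat \<Rightarrow> real) \<Rightarrow> (nat \<Rightarrow> real) set" where
  "svm_opt_set m C Q w = {\<alpha>. svm_dual_feasible m C \<alpha> \<and>
      (\<forall>\<beta>. svm_dual_feasible m C \<beta> \<longrightarrow> svm_dual_obj m Q w \<alpha> \<le> svm_dual_obj m Q w \<beta>)}"

definition class_score :: "nat \<Rightarrow> real \<Rightarrow> (nat \<Rightarrow> nat \<Rightarrow> real) \<Rightarrow> (nat \<Rightarrow> real) \<Rightarrow> (nat \<Rightarrow> nat) \<Rightarrow> nat \<Rightarrow> real" where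
  "class_score m C Q Qt yt c =
     (let \<alpha> = (SOME \<alpha>. \<alpha> \<in> svm_opt_set m C Q (bin_label yt c))
      in \<Sum>i=1..m. bin_label yt c i * \<alpha> i * Qt i)"

text \<open>Adversarial label set A(y): labels in [K] on [m], at most floor(eps m) flips
  (outside [m] the labels are left unchanged, which has no effect).\<close>
definition adv_set :: "nat \<Rightarrow> nat \<Rightarrow> real \<Rightarrow> (nat \<Rightarrow> nat) \<Rightarrow> (nat \<Rightarrow> nat) set" where
  "adv_set K m \<epsilon> y = {yt. (\<forall>i\<in>{1..m}. yt i \<in> {1..K}) \<and> (\<forall>i. i \<notin> {1..m} \<longrightarrow> yt i = y i) \<and>
      card {i\<in>{1..m}. yt i \<noteq> y i} \<le> nat \<lfloor>\<epsilon> * real m\<rfloor>}"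

definition score_margin :: "nat \<Rightarrow> nat \<Rightarrow> real \<Rightarrow> (nat \<Rightarrow> nat \<Rightarrow> real) \<Rightarrow> (nat \<Rightarrow> real) \<Rightarrow> nat \<Rightarrow> (nat \<Rightarrow> nat) \<Rightarrow> real" where
  "score_margin K m C Q Qt chat yt =
     class_score m C Q Qt yt chat - Max {class_score m C Q Qt yt c | c. c \<in> {1..K} \<and> c \<noteq> chat}"

definition certifiably_robust :: "nat \<Rightarrow> nat \<Rightarrow> real \<Rightarrow> (nat \<Rightarrow> nat \<Rightarrow> real) \<Rightarrow> (nat \<Rightarrow> real) \<Rightarrow> real \<Rightarrow> (nat \<Rightarrow> nat) \<Rightarrow> nat \<Rightarrow> bool" where
  "certifiably_robust K m C Q Qt \<epsilon> y chat \<longleftrightarrow>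
     (\<forall>yt\<in>adv_set K m \<epsilon> y. score_margin K m C Q Qt chat yt > 0)"

definition milp_feasible ::
  "nat \<Rightarrow> nat \<Rightarrow> real \<Rightarrow> (nat \<Rightarrow> nat \<Rightarrow> real) \<Rightarrow> (nat \<Rightarrow> real) \<Rightarrow> real \<Rightarrow> (nat \<Rightarrow> nat) \<Rightarrow> nat \<Rightarrow>
   real \<Rightarrow> (nat \<Rightarrow> real) \<Rightarrow> (nat \<Rightarrow> real) \<Rightarrow>
   (nat \<Rightarrow> nat \<Rightarrow> real) \<Rightarrow> (nat \<Rightarrow> nat \<Rightarrow> real) \<Rightarrow> (nat \<Rightarrow> nat \<Rightarrow> real) \<Rightarrow> (nat \<Rightarrow> nat \<Rightarrow> real) \<Rightarrow>
   (nat \<Rightarrow> nat \<Rightarrow> real) \<Rightarrow> (nat \<Rightarrow> nat \<Rightarrow> real) \<Rightarrow> (nat \<Rightarrow> nat \<Rightarrow> real) \<Rightarrow> (nat \<Rightarrow> nat \<Rightarrow> real) \<Rightarrow>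
   (nat \<Rightarrow> nat \<Rightarrow> nat \<Rightarrow> real) \<Rightarrow> bool" where
  "milp_feasible K m C Q Qt \<epsilon> y chat pstar p b \<alpha> yt z u v yt' s t R \<longleftrightarrow>
    (let pU = C * (\<Sum>i=1..m. \<bar>Qt i\<bar>); pL = - C * (\<Sum>i=1..m. \<bar>Qt i\<bar>);
         Mu = (\<lambda>i. (\<Sum>j=1..m. C * \<bar>Q i j\<bar>) - 1);
         Mv = (\<lambda>i. (\<Sum>j=1..m. C * \<bar>Q i j\<bar>) + 1) in
     (\<forall>c\<in>{1..K}. c \<noteq> chat \<longrightarrow> b c \<in> {0,1}) \<and>
     (\<forall>c\<in>{1..K}. \<forall>i\<in>{1..m}. yt' c i \<in> {0,1} \<and> s c i \<in> {0,1} \<and> t c i \<in> {0,1}) \<and>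
     (\<Sum>i=1..m. 1 - (\<Sum>c=1..K. onehot_label y c i * yt' c i)) \<le> real (nat \<lfloor>\<epsilon> * real m\<rfloor>) \<and>
     (\<forall>i\<in>{1..m}. (\<Sum>c=1..K. yt' c i) = 1) \<and>
     (\<Sum>c\<in>{1..K} - {chat}. b c) = 1 \<and>
     (\<forall>c\<in>{1..K}. c \<noteq> chat \<longrightarrow> pstar \<ge> p c \<and> pstar \<le> p c + (1 - b c) * (pU - pL)) \<and>
     (\<forall>c\<in>{1..K}. p c = (\<Sum>i=1..m. z c i * Qt i)) \<and>
     (\<forall>c\<in>{1..K}. \<forall>i\<in>{1..m}.
        (\<Sum>j=1..m. R c i j * Q i j) - 1 - u c i + v c i = 0 \<and>
        (\<forall>j\<in>{1..m}.
           - C * (1 + yt c i) \<le> R c i j + z c j \<and> R c i j + z c j \<le> C * (1 + yt c i) \<and>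
           - C * (1 - yt c i) \<le> R c i j - z c j \<and> R c i j - z c j \<le> C * (1 - yt c i)) \<and>
        - \<alpha> c i \<le> z c i \<and> z c i \<le> \<alpha> c i \<and>
        \<alpha> c i - C * (1 - yt c i) \<le> z c i \<and> z c i \<le> C * (1 + yt c i) - \<alpha> c i \<and>
        u c i \<le> Mu i * s c i \<and> \<alpha> c i \<le> C * (1 - s c i) \<and>
        v c i \<le> Mv i * t c i \<and> \<alpha> c i \<ge> C * t c i \<and>
        u c i \<ge> 0 \<and> v c i \<ge> 0 \<and>
        yt c i = 2 * yt' c i - 1))"

definition milp_values :: "nat \<Rightarrow> nat \<Rightarrow> real \<Rightarrow> (nat \<Rightarrow> nat \<Rightarrow> real) \<Rightarrow> (nat \<Rightarrow> real) \<Rightarrow> real \<Rightarrow> (nat \<Rightarrow> nat) \<Rightarrow> nat \<Rightarrow> real set" where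
  "milp_values K m C Q Qt \<epsilon> y chat = {p chat - pstar | pstar p b \<alpha> yt z u v yt' s t R.
      milp_feasible K m C Q Qt \<epsilon> y chat pstar p b \<alpha> yt z u v yt' s t R}"

end

theory Submission
  imports Defs "HOL-Analysis.Analysis"
begin

text \<open>Its one-hot variables
  encode a perturbed labelling within the budget. For each class, the big-M constraints force
  z i = w i * \<alpha> i and R i j = w i * w j * \<alpha> j for the signed labels w, so that u - v is the gradient
  of the SVM dual objective, while the binaries s and t encode complementary slackness. As the
  dual is convex, these KKT conditions characterise its optimal solutions, so p c is the class
  score; b then selects a maximal score among the classes other than chat. Hence the objective
  values of feasible points are exactly the margins over the finite, nonempty set of admissible
  labellings, and their minimum is the optimal value.\<close>

definition quad_form :: "nat \<Rightarrow> (nat \<Rightarrow> nat \<Rightarrow> real) \<Rightarrow> (nat \<Rightarrow> real) \<Rightarrow> real" where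
  "quad_form m Q x = (\<Sum>i=1..m. \<Sum>j=1..m. x i * x j * Q i j)"

definition svm_dual_grad ::
  "nat \<Rightarrow> (nat \<Rightarrow> nat \<Rightarrow> real) \<Rightarrow> (nat \<Rightarrow> real) \<Rightarrow> (nat \<Rightarrow> real) \<Rightarrow> nat \<Rightarrow> real" where
  "svm_dual_grad m Q w \<alpha> i = (\<Sum>j=1..m. w i * w j * \<alpha> j * Q i j) - 1"

definition svm_kkt :: "nat \<Rightarrow> real \<Rightarrow> (nat \<Rightarrow> nat \<Rightarrow> real) \<Rightarrow> (nat \<Rightarrow> real) \<Rightarrow> (nat \<Rightarrow> real) \<Rightarrow> bool" where
  "svm_kkt m C Q w \<alpha> \<longleftrightarrow>
     (\<forall>i\<in>{1..m}. (0 < svm_dual_grad m Q w \<alpha> i \<longrightarrow> \<alpha> i = 0) \<and> (svm_dual_grad m Q w \<alpha> i < 0 \<longrightarrow> \<alpha> i = C))"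

text \<open>The kernel matrix of the labelled nodes, bordered by the test node's kernel values and some
  self-similarity Qtt, is positive semidefinite.\<close>
definition psd_with_test :: "nat \<Rightarrow> (nat \<Rightarrow> nat \<Rightarrow> real) \<Rightarrow> (nat \<Rightarrow> real) \<Rightarrow> bool" where
  "psd_with_test m Q Qt \<longleftrightarrow>
     (\<exists>Qtt. \<forall>x x0. 0 \<le> x0 * x0 * Qtt + 2 * x0 * (\<Sum>i=1..m. x i * Qt i) + quad_form m Q x)"

lemma quad_form_add:
  assumes sym: "\<forall>i\<in>{1..m}. \<forall>j\<in>{1..m}. Q i j = Q j i"
  shows "quad_form m Q (\<lambda>i. a i + d i)
           = quad_form m Q a + 2 * (\<Sum>i=1..m. \<Sum>j=1..m. d i * a j * Q i j) + quad_form m Q d"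
proof -
  have "(\<Sum>i=1..m. \<Sum>j=1..m. a i * d j * Q i j) = (\<Sum>j=1..m. \<Sum>i=1..m. a i * d j * Q i j)"
    by (rule sum.swap)
  also have "\<dots> = (\<Sum>i=1..m. \<Sum>j=1..m. d i * a j * Q i j)"
    using sym by (intro sum.cong refl) (auto simp: mult.commute)
  finally have cross: "(\<Sum>i=1..m. \<Sum>j=1..m. a i * d j * Q i j) = (\<Sum>i=1..m. \<Sum>j=1..m. d i * a j * Q i j)" .
  have "quad_form m Q (\<lambda>i. a i + d i) = (\<Sum>i=1..m. \<Sum>j=1..m.
          a i * a j * Q i j + a i * d j * Q i j + d i * a j * Q i j + d i * d j * Q i j)"
    unfolding quad_form_def by (intro sum.cong refl) (simp add: algebra_simps)
  also have "\<dots> = quad_form m Q a + (\<Sum>i=1..m. \<Sum>j=1..m. a i * d j * Q i j)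
                   + (\<Sum>i=1..m. \<Sum>j=1..m. d i * a j * Q i j) + quad_form m Q d"
    unfolding quad_form_def by (simp add: sum.distrib)
  finally show ?thesis using cross by simp
qed

lemma quad_form_scale: "quad_form m Q (\<lambda>i. c * x i) = c * c * quad_form m Q x"
  unfolding quad_form_def by (simp add: sum_distrib_left algebra_simps)

lemma quad_form_single:
  assumes "k \<in> {1..m}"
  shows "quad_form m Q (\<lambda>i. if i = k then c else 0) = c * c * Q k k"
proof -
  have row: "(\<Sum>j=1..m. x * (if j = k then c else 0) * Q i j) = x * c * Q i k" for x i
  proof -
    have "(\<Sum>j=1..m. x * (if j = k then c else 0) * Q i j) = (\<Sum>j=1..m. if j = k then x * c * Q i k else 0)"
      by (rule sum.cong) auto
    with assms show ?thesis by (simp add: sum.delta')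
  qed
  have "(\<Sum>i=1..m. (if i = k then c else 0) * c * Q i k) = (\<Sum>i=1..m. if i = k then c * c * Q k k else 0)"
    by (rule sum.cong) auto
  with assms show ?thesis
    unfolding quad_form_def row by (simp add: sum.delta')
qed

lemma svm_dual_obj_eq_quad_form:
  "svm_dual_obj m Q w \<alpha> = - (\<Sum>i=1..m. \<alpha> i) + 1/2 * quad_form m Q (\<lambda>i. w i * \<alpha> i)"
  unfolding svm_dual_obj_def quad_form_def by (simp add: algebra_simps)

lemma svm_dual_obj_diff:
  assumes sym: "\<forall>i\<in>{1..m}. \<forall>j\<in>{1..m}. Q i j = Q j i"
  shows "svm_dual_obj m Q w \<beta> - svm_dual_obj m Q w \<alpha>
     = (\<Sum>i=1..m. svm_dual_grad m Q w \<alpha> i * (\<beta> i - \<alpha> i)) + 1/2 * quad_form m Q (\<lambda>i. w i * (\<beta> i - \<alpha> i))"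
proof -
  define a where "a = (\<lambda>i. w i * \<alpha> i)"
  define d where "d = (\<lambda>i. w i * (\<beta> i - \<alpha> i))"
  have wb: "(\<lambda>i. w i * \<beta> i) = (\<lambda>i. a i + d i)"
    unfolding a_def d_def by (auto simp: algebra_simps)
  have "(\<Sum>i=1..m. svm_dual_grad m Q w \<alpha> i * (\<beta> i - \<alpha> i))
      = (\<Sum>i=1..m. (\<Sum>j=1..m. d i * a j * Q i j) - (\<beta> i - \<alpha> i))"
    unfolding svm_dual_grad_def a_def d_def
    by (intro sum.cong refl) (simp add: sum_distrib_left sum_distrib_right algebra_simps sum_subtractf)
  also have "\<dots> = (\<Sum>i=1..m. \<Sum>j=1..m. d i * a j * Q i j) - (\<Sum>i=1..m. \<beta> i) + (\<Sum>i=1..m. \<alpha> i)"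
    by (simp add: sum_subtractf)
  finally have grad: "(\<Sum>i=1..m. svm_dual_grad m Q w \<alpha> i * (\<beta> i - \<alpha> i))
      = (\<Sum>i=1..m. \<Sum>j=1..m. d i * a j * Q i j) - (\<Sum>i=1..m. \<beta> i) + (\<Sum>i=1..m. \<alpha> i)" .
  show ?thesis
    unfolding svm_dual_obj_eq_quad_form wb a_def[symmetric] d_def[symmetric] grad quad_form_add[OF sym]
    by (simp add: algebra_simps)
qed

lemma svm_dual_obj_update:
  assumes sym: "\<forall>i\<in>{1..m}. \<forall>j\<in>{1..m}. Q i j = Q j i" and k: "k \<in> {1..m}" and w: "\<bar>w k\<bar> = 1"
  shows "svm_dual_obj m Q w (\<alpha>(k := \<alpha> k + h)) - svm_dual_obj m Q w \<alpha>
           = h * svm_dual_grad m Q w \<alpha> k + 1/2 * h * h * Q k k"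
proof -
  have step: "(\<alpha>(k := \<alpha> k + h)) i - \<alpha> i = (if i = k then h else 0)" for i
    by simp
  have "(\<Sum>i=1..m. svm_dual_grad m Q w \<alpha> i * (if i = k then h else 0))
      = (\<Sum>i=1..m. if i = k then h * svm_dual_grad m Q w \<alpha> k else 0)"
    by (rule sum.cong) auto
  also have "\<dots> = h * svm_dual_grad m Q w \<alpha> k"
    using k by (simp add: sum.delta')
  finally have lin: "(\<Sum>i=1..m. svm_dual_grad m Q w \<alpha> i * (if i = k then h else 0)) = h * svm_dual_grad m Q w \<alpha> k" .
  have "(\<lambda>i. w i * (if i = k then h else 0)) = (\<lambda>i. if i = k then w k * h else 0)"
    by auto
  moreover have "w k * w k = 1"
    using w abs_mult_self_eq[of "w k"] by simp
  ultimately have quad: "quad_form m Q (\<lambda>i. w i * (if i = k then h else 0)) = h * h * Q k k"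
    by (simp add: quad_form_single[OF k] algebra_simps)
  show ?thesis
    unfolding svm_dual_obj_diff[OF sym] step lin quad by simp
qed

lemma svm_dual_obj_cong:
  assumes "\<And>i. i \<in> {1..m} \<Longrightarrow> w i = w' i" and "\<And>i. i \<in> {1..m} \<Longrightarrow> \<alpha> i = \<beta> i"
  shows "svm_dual_obj m Q w \<alpha> = svm_dual_obj m Q w' \<beta>"
  unfolding svm_dual_obj_def using assms by (intro arg_cong2[where f = "(+)"] sum.cong refl) auto

lemma svm_opt_set_cong:
  assumes "\<And>i. i \<in> {1..m} \<Longrightarrow> w i = w' i"
  shows "svm_opt_set m C Q w = svm_opt_set m C Q w'"
proof -
  have "svm_dual_obj m Q w \<beta> = svm_dual_obj m Q w' \<beta>" for \<beta>
    by (rule svm_dual_obj_cong[OF assms refl])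
  then show ?thesis
    unfolding svm_opt_set_def by simp
qed

lemma svm_opt_set_nonempty:
  assumes "0 \<le> C"
  shows "\<exists>\<alpha>. \<alpha> \<in> svm_opt_set m C Q w"
proof -
  let ?T = "product_topology (\<lambda>_. euclideanreal) {1..m}"
  let ?S = "PiE {1..m} (\<lambda>_. {0..C})"
  let ?f = "svm_dual_obj m Q w"
  have "compactin ?T ?S"
    by (simp add: compactin_PiE)
  moreover have "continuous_map ?T euclideanreal ?f"
    unfolding svm_dual_obj_def by (intro continuous_intros continuous_map_product_projection) auto
  ultimately have "compact (?f ` ?S)"
    using image_compactin by fastforce
  moreover have "(\<lambda>i\<in>{1..m}. 0) \<in> ?S"
    using assms by auto
  ultimately obtain \<alpha> where \<alpha>: "\<alpha> \<in> ?S" "\<forall>\<beta>\<in>?S. ?f \<alpha> \<le> ?f \<beta>"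
    using compact_attains_inf[of "?f ` ?S"] by blast
  have "\<alpha> \<in> svm_opt_set m C Q w"
    unfolding svm_opt_set_def
  proof (intro CollectI conjI allI impI)
    show "svm_dual_feasible m C \<alpha>"
      using \<alpha>(1) unfolding svm_dual_feasible_def by auto
    fix \<beta> assume "svm_dual_feasible m C \<beta>"
    then have "restrict \<beta> {1..m} \<in> ?S"
      unfolding svm_dual_feasible_def by auto
    moreover have "?f (restrict \<beta> {1..m}) = ?f \<beta>"
      by (rule svm_dual_obj_cong) auto
    ultimately show "?f \<alpha> \<le> ?f \<beta>"
      using \<alpha>(2) by metis
  qed
  then show ?thesis
    by blast
qed

lemma slope_nonpos_of_local_min:
  fixes g a q :: real
  assumes a: "0 < a" and min: "\<forall>h. 0 < h \<longrightarrow> h \<le> a \<longrightarrow> 0 \<le> - h * g + 1/2 * h * h * q"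
  shows "g \<le> 0"
proof (rule ccontr)
  assume "\<not> g \<le> 0"
  then have g: "0 < g" by simp
  define h where "h = min a (g / (\<bar>q\<bar> + 1))"
  have h: "0 < h" "h \<le> a"
    using a g unfolding h_def by auto
  have "h * q \<le> h * \<bar>q\<bar>"
    using h(1) by (simp add: mult_left_mono)
  also have "\<dots> \<le> g / (\<bar>q\<bar> + 1) * \<bar>q\<bar>"
    unfolding h_def by (intro mult_right_mono) auto
  also have "\<dots> < g"
    using g by (simp add: field_simps)
  finally have "h * (h * q) < h * g"
    using h(1) by (rule mult_strict_left_mono)
  then have "- h * g + 1/2 * h * h * q < 0"
    using g h(1) by (simp add: algebra_simps)
  with min h show False
    by fastforce
qed

lemma linear_coeff_zero_of_nonneg_quadratic:
  fixes q s :: real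
  assumes "\<forall>x. 0 \<le> x * x * q + 2 * x * s"
  shows "s = 0"
proof (rule ccontr)
  assume s: "s \<noteq> 0"
  define t where "t = \<bar>q\<bar> + 1"
  have t: "0 < t"
    unfolding t_def by simp
  have "(- s / t) * (- s / t) * q + 2 * (- s / t) * s = s * s / (t * t) * (q - 2 * t)"
    using t by (simp add: field_simps)
  also have "\<dots> < 0"
    using s t by (intro mult_pos_neg divide_pos_pos) (auto simp: t_def zero_less_mult_iff linorder_neq_iff)
  finally show False
    using assms by (metis not_le)
qed

lemma svm_kkt_imp_opt:
  assumes sym: "\<forall>i\<in>{1..m}. \<forall>j\<in>{1..m}. Q i j = Q j i"
    and psd: "\<forall>x. 0 \<le> quad_form m Q x"
    and feasible: "svm_dual_feasible m C \<alpha>" and kkt: "svm_kkt m C Q w \<alpha>"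
  shows "\<alpha> \<in> svm_opt_set m C Q w"
  unfolding svm_opt_set_def
proof (intro CollectI conjI allI impI feasible)
  fix \<beta> assume \<beta>: "svm_dual_feasible m C \<beta>"
  have "0 \<le> (\<Sum>i=1..m. svm_dual_grad m Q w \<alpha> i * (\<beta> i - \<alpha> i))"
  proof (rule sum_nonneg)
    fix i assume "i \<in> {1..m}"
    then show "0 \<le> svm_dual_grad m Q w \<alpha> i * (\<beta> i - \<alpha> i)"
      using kkt \<beta> unfolding svm_kkt_def svm_dual_feasible_def
      by (cases "svm_dual_grad m Q w \<alpha> i" "0::real" rule: linorder_cases) (auto simp: mult_nonpos_nonpos)
  qed
  with psd[rule_format, of "\<lambda>i. w i * (\<beta> i - \<alpha> i)"] svm_dual_obj_diff[OF sym, of w \<beta> \<alpha>]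
  show "svm_dual_obj m Q w \<alpha> \<le> svm_dual_obj m Q w \<beta>"
    by linarith
qed

lemma svm_opt_imp_kkt:
  assumes sym: "\<forall>i\<in>{1..m}. \<forall>j\<in>{1..m}. Q i j = Q j i"
    and w: "\<forall>i\<in>{1..m}. \<bar>w i\<bar> = 1" and opt: "\<alpha> \<in> svm_opt_set m C Q w"
  shows "svm_kkt m C Q w \<alpha>"
  unfolding svm_kkt_def
proof (intro ballI conjI impI)
  fix k assume k: "k \<in> {1..m}"
  let ?g = "svm_dual_grad m Q w \<alpha> k"
  have feasible: "svm_dual_feasible m C \<alpha>"
    and min: "\<And>\<beta>. svm_dual_feasible m C \<beta> \<Longrightarrow> svm_dual_obj m Q w \<alpha> \<le> svm_dual_obj m Q w \<beta>"
    using opt unfolding svm_opt_set_def by auto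
  have \<alpha>k: "0 \<le> \<alpha> k" "\<alpha> k \<le> C"
    using feasible k unfolding svm_dual_feasible_def by auto
  have move: "0 \<le> h * ?g + 1/2 * h * h * Q k k" if "0 \<le> \<alpha> k + h" "\<alpha> k + h \<le> C" for h
  proof -
    have "svm_dual_feasible m C (\<alpha>(k := \<alpha> k + h))"
      using feasible that unfolding svm_dual_feasible_def by auto
    then show ?thesis
      using min svm_dual_obj_update[OF sym k, of w \<alpha> h] w k by fastforce
  qed
  show "\<alpha> k = 0" if "0 < ?g"
  proof (rule ccontr)
    assume "\<alpha> k \<noteq> 0"
    then have "?g \<le> 0"
      using \<alpha>k move[of "- h" for h]
      by (intro slope_nonpos_of_local_min[of "\<alpha> k" _ "Q k k"]) auto
    with that show False by simp
  qed
  show "\<alpha> k = C" if "?g < 0"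
  proof (rule ccontr)
    assume "\<alpha> k \<noteq> C"
    then have "- ?g \<le> 0"
      using \<alpha>k move by (intro slope_nonpos_of_local_min[of "C - \<alpha> k" _ "Q k k"]) auto
    with that show False by simp
  qed
qed

lemma psd_with_test_imp_psd:
  assumes "psd_with_test m Q Qt"
  shows "\<forall>x. 0 \<le> quad_form m Q x"
proof
  fix x
  obtain Qtt where "\<forall>x x0. 0 \<le> x0 * x0 * Qtt + 2 * x0 * (\<Sum>i=1..m. x i * Qt i) + quad_form m Q x"
    using assms unfolding psd_with_test_def by blast
  then have "0 \<le> 0 * 0 * Qtt + 2 * 0 * (\<Sum>i=1..m. x i * Qt i) + quad_form m Q x"
    by blast
  then show "0 \<le> quad_form m Q x"
    by simp
qed

text \<open>Both optima and their midpoint have the same objective value, so the convex quadratic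
  part of the objective must be affine along the segment between them.\<close>
lemma svm_opt_diff_quad_form_zero:
  assumes sym: "\<forall>i\<in>{1..m}. \<forall>j\<in>{1..m}. Q i j = Q j i" and psd: "\<forall>x. 0 \<le> quad_form m Q x"
    and \<alpha>: "\<alpha> \<in> svm_opt_set m C Q w" and \<beta>: "\<beta> \<in> svm_opt_set m C Q w"
  shows "quad_form m Q (\<lambda>i. w i * (\<beta> i - \<alpha> i)) = 0"
proof -
  have feasible: "svm_dual_feasible m C \<alpha>" "svm_dual_feasible m C \<beta>"
    using \<alpha> \<beta> unfolding svm_opt_set_def by auto
  define \<gamma> where "\<gamma> = (\<lambda>i. (\<alpha> i + \<beta> i) / 2)"
  have "svm_dual_feasible m C \<gamma>"
    unfolding svm_dual_feasible_def
  proof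
    fix i assume "i \<in> {1..m}"
    then have "0 \<le> \<alpha> i" "\<alpha> i \<le> C" "0 \<le> \<beta> i" "\<beta> i \<le> C"
      using feasible unfolding svm_dual_feasible_def by auto
    then show "0 \<le> \<gamma> i \<and> \<gamma> i \<le> C"
      unfolding \<gamma>_def by auto
  qed
  then have opt_values: "svm_dual_obj m Q w \<alpha> = svm_dual_obj m Q w \<beta>"
      "svm_dual_obj m Q w \<alpha> \<le> svm_dual_obj m Q w \<gamma>"
    using \<alpha> \<beta> feasible unfolding svm_opt_set_def by (auto intro: order.antisym)
  define d where "d = (\<lambda>i. w i * (\<beta> i - \<alpha> i))"
  define S where "S = (\<Sum>i=1..m. svm_dual_grad m Q w \<alpha> i * (\<beta> i - \<alpha> i))"
  have "svm_dual_obj m Q w \<beta> - svm_dual_obj m Q w \<alpha> = S + 1/2 * quad_form m Q d"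
    unfolding S_def d_def by (rule svm_dual_obj_diff[OF sym])
  moreover have "svm_dual_obj m Q w \<gamma> - svm_dual_obj m Q w \<alpha> = 1/2 * S + 1/8 * quad_form m Q d"
  proof -
    have "(\<Sum>i=1..m. svm_dual_grad m Q w \<alpha> i * (\<gamma> i - \<alpha> i)) = 1/2 * S"
      unfolding S_def \<gamma>_def sum_distrib_left by (rule sum.cong) (auto simp: field_simps)
    moreover have half: "(\<lambda>i. w i * (\<gamma> i - \<alpha> i)) = (\<lambda>i. 1/2 * d i)"
      unfolding \<gamma>_def d_def by (auto simp: field_simps)
    have "quad_form m Q (\<lambda>i. w i * (\<gamma> i - \<alpha> i)) = 1/4 * quad_form m Q d"
      unfolding half quad_form_scale by simp
    ultimately show ?thesis
      unfolding svm_dual_obj_diff[OF sym] by simp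
  qed
  moreover have "0 \<le> quad_form m Q d"
    using psd ..
  ultimately show ?thesis
    unfolding d_def[symmetric] using opt_values by linarith
qed

lemma svm_opt_score_unique:
  assumes sym: "\<forall>i\<in>{1..m}. \<forall>j\<in>{1..m}. Q i j = Q j i" and psd: "psd_with_test m Q Qt"
    and \<alpha>: "\<alpha> \<in> svm_opt_set m C Q w" and \<beta>: "\<beta> \<in> svm_opt_set m C Q w"
  shows "(\<Sum>i=1..m. w i * \<alpha> i * Qt i) = (\<Sum>i=1..m. w i * \<beta> i * Qt i)"
proof -
  obtain Qtt where ext: "\<forall>x x0. 0 \<le> x0 * x0 * Qtt + 2 * x0 * (\<Sum>i=1..m. x i * Qt i) + quad_form m Q x"
    using psd unfolding psd_with_test_def by blast
  define d where "d = (\<lambda>i. w i * (\<beta> i - \<alpha> i))"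
  have "quad_form m Q d = 0"
    unfolding d_def by (rule svm_opt_diff_quad_form_zero[OF sym psd_with_test_imp_psd[OF psd] \<alpha> \<beta>])
  then have "(\<Sum>i=1..m. d i * Qt i) = 0"
    using spec[OF ext, of d] by (intro linear_coeff_zero_of_nonneg_quadratic[of Qtt]) simp
  moreover have "(\<Sum>i=1..m. d i * Qt i) = (\<Sum>i=1..m. w i * \<beta> i * Qt i) - (\<Sum>i=1..m. w i * \<alpha> i * Qt i)"
    unfolding d_def sum_subtractf[symmetric] by (rule sum.cong) (simp_all add: algebra_simps)
  ultimately show ?thesis
    by simp
qed

lemma svm_dual_grad_bound:
  assumes "svm_dual_feasible m C \<alpha>" and "\<forall>j\<in>{1..m}. \<bar>w j\<bar> = 1" and "i \<in> {1..m}"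
  shows "\<bar>svm_dual_grad m Q w \<alpha> i + 1\<bar> \<le> (\<Sum>j=1..m. C * \<bar>Q i j\<bar>)"
proof -
  have "\<bar>svm_dual_grad m Q w \<alpha> i + 1\<bar> \<le> (\<Sum>j=1..m. \<bar>w i * w j * \<alpha> j * Q i j\<bar>)"
    unfolding svm_dual_grad_def by (simp add: sum_abs)
  also have "\<dots> \<le> (\<Sum>j=1..m. C * \<bar>Q i j\<bar>)"
    using assms unfolding svm_dual_feasible_def
    by (intro sum_mono) (simp add: abs_mult mult_right_mono)
  finally show ?thesis .
qed

lemma svm_score_bound:
  assumes "svm_dual_feasible m C \<alpha>" and "\<forall>i\<in>{1..m}. \<bar>w i\<bar> = 1"
  shows "\<bar>\<Sum>i=1..m. w i * \<alpha> i * Qt i\<bar> \<le> C * (\<Sum>i=1..m. \<bar>Qt i\<bar>)"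
proof -
  have "\<bar>\<Sum>i=1..m. w i * \<alpha> i * Qt i\<bar> \<le> (\<Sum>i=1..m. \<bar>w i * \<alpha> i * Qt i\<bar>)"
    by (rule sum_abs)
  also have "\<dots> \<le> (\<Sum>i=1..m. C * \<bar>Qt i\<bar>)"
    using assms unfolding svm_dual_feasible_def
    by (intro sum_mono) (simp add: abs_mult mult_right_mono)
  finally show ?thesis
    by (simp add: sum_distrib_left)
qed

lemma bin_label_abs [simp]: "\<bar>bin_label L c i\<bar> = 1"
  unfolding bin_label_def by simp

lemma bin_label_eq_onehot: "bin_label L c i = 2 * onehot_label L c i - 1"
  unfolding bin_label_def onehot_label_def by simp

lemma onehot_label_sum:
  assumes "L i \<in> {1..K}"
  shows "(\<Sum>c=1..K. onehot_label L c i) = 1"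
  using assms unfolding onehot_label_def by (simp add: sum.delta)

lemma onehot_label_agreement:
  assumes "y i \<in> {1..K}"
  shows "(\<Sum>c=1..K. onehot_label y c i * onehot_label L c i) = of_bool (L i = y i)"
proof -
  have "(\<Sum>c=1..K. onehot_label y c i * onehot_label L c i) = (\<Sum>c=1..K. if c = y i then onehot_label L c i else 0)"
    by (rule sum.cong) (auto simp: onehot_label_def)
  also have "\<dots> = onehot_label L (y i) i"
    using assms by (simp add: sum.delta)
  finally show ?thesis
    by (simp add: onehot_label_def)
qed

lemma onehot_disagreement_sum:
  assumes "\<forall>i\<in>{1..m}. y i \<in> {1..K}"
  shows "(\<Sum>i=1..m. 1 - (\<Sum>c=1..K. onehot_label y c i * onehot_label L c i))
           = real (card {i\<in>{1..m}. L i \<noteq> y i})"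
proof -
  have "(\<Sum>i=1..m. 1 - (\<Sum>c=1..K. onehot_label y c i * onehot_label L c i))
      = (\<Sum>i\<in>{1..m}. of_bool (L i \<noteq> y i))"
  proof (rule sum.cong)
    fix i assume "i \<in> {1..m}"
    then show "1 - (\<Sum>c=1..K. onehot_label y c i * onehot_label L c i) = of_bool (L i \<noteq> y i)"
      using assms onehot_label_agreement[of y i K L] by simp
  qed simp
  also have "\<dots> = real (card {i\<in>{1..m}. L i \<noteq> y i})"
    by (simp add: of_bool_def sum.inter_filter[symmetric])
  finally show ?thesis .
qed

lemma onehot_column_unique:
  fixes f :: "nat \<Rightarrow> real"
  assumes "\<forall>c\<in>{1..K}. f c \<in> {0, 1}" and "(\<Sum>c=1..K. f c) = 1"
  shows "\<exists>c0\<in>{1..K}. \<forall>c\<in>{1..K}. f c = of_bool (c = c0)"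
proof -
  have "(\<Sum>c=1..K. f c) = (\<Sum>c=1..K. if f c = 1 then 1 else 0)"
    using assms(1) by (intro sum.cong) auto
  also have "\<dots> = real (card {c\<in>{1..K}. f c = 1})"
    by (simp add: sum.inter_filter[symmetric])
  finally have "real (card {c\<in>{1..K}. f c = 1}) = (\<Sum>c=1..K. f c)" ..
  then have "card {c\<in>{1..K}. f c = 1} = 1"
    using assms(2) by simp
  then obtain c0 where c0: "{c\<in>{1..K}. f c = 1} = {c0}"
    by (rule card_1_singletonE)
  then show ?thesis
    using assms(1) by (intro bexI[of _ c0]) auto
qed

lemma onehot_matrix_eq_labels:
  fixes yt' :: "nat \<Rightarrow> nat \<Rightarrow> real"
  assumes "\<forall>c\<in>{1..K}. \<forall>i\<in>{1..m}. yt' c i \<in> {0, 1}" and "\<forall>i\<in>{1..m}. (\<Sum>c=1..K. yt' c i) = 1"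
  obtains L where "\<forall>i\<in>{1..m}. L i \<in> {1..K}" and "\<forall>i. i \<notin> {1..m} \<longrightarrow> L i = y i"
    and "\<forall>c\<in>{1..K}. \<forall>i\<in>{1..m}. yt' c i = onehot_label L c i"
proof -
  have "\<forall>i\<in>{1..m}. \<exists>c0\<in>{1..K}. \<forall>c\<in>{1..K}. yt' c i = of_bool (c = c0)"
    using assms by (intro ballI onehot_column_unique) auto
  then obtain f where f: "\<forall>i\<in>{1..m}. f i \<in> {1..K} \<and> (\<forall>c\<in>{1..K}. yt' c i = of_bool (c = f i))"
    by metis
  define L where "L i = (if i \<in> {1..m} then f i else y i)" for i
  show thesis
  proof (rule that)
    show "\<forall>i\<in>{1..m}. L i \<in> {1..K}" "\<forall>i. i \<notin> {1..m} \<longrightarrow> L i = y i"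
      using f unfolding L_def by auto
    show "\<forall>c\<in>{1..K}. \<forall>i\<in>{1..m}. yt' c i = onehot_label L c i"
      using f unfolding L_def onehot_label_def by auto
  qed
qed

lemma signed_product_encoding:
  fixes w a z C :: real
  assumes "\<bar>w\<bar> = 1"
  shows "(- a \<le> z \<and> z \<le> a \<and> a - C * (1 - w) \<le> z \<and> z \<le> C * (1 + w) - a)
           \<longleftrightarrow> (z = w * a \<and> 0 \<le> a \<and> a \<le> C)"
proof -
  have "w = 1 \<or> w = -1"
    using assms by (auto simp: abs_if split: if_splits)
  then show ?thesis
    by auto
qed

lemma signed_copy_encoding:
  fixes w r x C :: real
  assumes "\<bar>w\<bar> = 1" and "\<bar>x\<bar> \<le> C"
  shows "(- C * (1 + w) \<le> r + x \<and> r + x \<le> C * (1 + w) \<and> - C * (1 - w) \<le> r - x \<and> r - x \<le> C * (1 - w))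
           \<longleftrightarrow> r = w * x"
proof -
  have "w = 1 \<or> w = -1"
    using assms(1) by (auto simp: abs_if split: if_splits)
  then show ?thesis
    using assms(2) by (auto simp: abs_le_iff)
qed

lemma complementarity_encoding_sound:
  fixes g a u v s t Mu Mv C :: real
  assumes "s \<in> {0, 1}" and "t \<in> {0, 1}" and "g = u - v" and "0 \<le> u" and "0 \<le> v"
    and "u \<le> Mu * s" and "a \<le> C * (1 - s)" and "v \<le> Mv * t" and "C * t \<le> a"
    and "0 \<le> a" and "a \<le> C"
  shows "(0 < g \<longrightarrow> a = 0) \<and> (g < 0 \<longrightarrow> a = C)"
  using assms by auto

lemma complementarity_encoding_complete:
  fixes g a B C :: real
  assumes "\<bar>g + 1\<bar> \<le> B" and "0 < g \<longrightarrow> a = 0" and "g < 0 \<longrightarrow> a = C" and "0 \<le> a" and "a \<le> C"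
  shows "max g 0 \<le> (B - 1) * of_bool (0 < g) \<and> a \<le> C * (1 - of_bool (0 < g)) \<and>
         max (- g) 0 \<le> (B + 1) * of_bool (g < 0) \<and> C * of_bool (g < 0) \<le> a"
  using assms by (auto simp: abs_le_iff)

lemma max_selection_sound:
  fixes p b :: "'a \<Rightarrow> real"
  assumes "finite S" and "\<forall>c\<in>S. b c \<in> {0, 1}" and "(\<Sum>c\<in>S. b c) = 1"
    and "\<forall>c\<in>S. p c \<le> pstar \<and> pstar \<le> p c + (1 - b c) * D"
  shows "pstar = Max (p ` S)"
proof -
  have "\<exists>c0\<in>S. b c0 \<noteq> 0"
  proof (rule ccontr)
    assume "\<not> (\<exists>c0\<in>S. b c0 \<noteq> 0)"
    then have "(\<Sum>c\<in>S. b c) = 0"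
      by simp
    with assms(3) show False
      by simp
  qed
  then obtain c0 where c0: "c0 \<in> S" "b c0 \<noteq> 0"
    by blast
  then have "pstar \<le> p c0"
    using assms(2,4) by fastforce
  then show ?thesis
    using assms(1,4) c0(1) by (intro Max_eqI[symmetric]) force+
qed

lemma max_selection_complete:
  fixes p :: "'a \<Rightarrow> real"
  assumes "finite S" and "S \<noteq> {}" and "\<forall>c\<in>S. \<bar>p c\<bar> \<le> B"
  shows "\<exists>b. (\<forall>c\<in>S. b c \<in> {0, 1}) \<and> (\<Sum>c\<in>S. b c) = 1 \<and>
           (\<forall>c\<in>S. p c \<le> Max (p ` S) \<and> Max (p ` S) \<le> p c + (1 - b c) * (2 * B))"
proof -
  have "Max (p ` S) \<in> p ` S"
    using assms(1,2) by (intro Max_in) auto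
  then obtain c0 where c0: "c0 \<in> S" "p c0 = Max (p ` S)"
    by (metis imageE)
  have "(\<Sum>c\<in>S. of_bool (c = c0) :: real) = 1"
    using assms(1) c0(1) by (simp add: of_bool_def sum.delta')
  moreover have "p c \<le> p c0 \<and> p c0 \<le> p c + (1 - of_bool (c = c0)) * (2 * B)" if "c \<in> S" for c
  proof -
    have "p c \<le> p c0"
      using assms(1) that unfolding c0(2) by simp
    moreover have "\<bar>p c\<bar> \<le> B" "\<bar>p c0\<bar> \<le> B"
      using assms(3) that c0(1) by auto
    ultimately show ?thesis
      by (cases "c = c0") (auto simp: abs_le_iff)
  qed
  ultimately show ?thesis
    unfolding c0(2)[symmetric] by (intro exI[of _ "\<lambda>c. of_bool (c = c0)"]) auto
qed

definition svm_kkt_encoding ::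
  "nat \<Rightarrow> real \<Rightarrow> (nat \<Rightarrow> nat \<Rightarrow> real) \<Rightarrow> (nat \<Rightarrow> real) \<Rightarrow> (nat \<Rightarrow> real) \<Rightarrow> (nat \<Rightarrow> real) \<Rightarrow>
   (nat \<Rightarrow> real) \<Rightarrow> (nat \<Rightarrow> real) \<Rightarrow> (nat \<Rightarrow> real) \<Rightarrow> (nat \<Rightarrow> real) \<Rightarrow> (nat \<Rightarrow> nat \<Rightarrow> real) \<Rightarrow> bool" where
  "svm_kkt_encoding m C Q w \<alpha> z u v s t R \<longleftrightarrow>
    (\<forall>i\<in>{1..m}. s i \<in> {0, 1} \<and> t i \<in> {0, 1} \<and>
       (\<Sum>j=1..m. R i j * Q i j) - 1 - u i + v i = 0 \<and>
       (\<forall>j\<in>{1..m}.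
          - C * (1 + w i) \<le> R i j + z j \<and> R i j + z j \<le> C * (1 + w i) \<and>
          - C * (1 - w i) \<le> R i j - z j \<and> R i j - z j \<le> C * (1 - w i)) \<and>
       - \<alpha> i \<le> z i \<and> z i \<le> \<alpha> i \<and> \<alpha> i - C * (1 - w i) \<le> z i \<and> z i \<le> C * (1 + w i) - \<alpha> i \<and>
       u i \<le> ((\<Sum>j=1..m. C * \<bar>Q i j\<bar>) - 1) * s i \<and> \<alpha> i \<le> C * (1 - s i) \<and>
       v i \<le> ((\<Sum>j=1..m. C * \<bar>Q i j\<bar>) + 1) * t i \<and> C * t i \<le> \<alpha> i \<and>
       0 \<le> u i \<and> 0 \<le> v i)"

lemma milp_feasible_iff:
  "milp_feasible K m C Q Qt \<epsilon> y chat pstar p b \<alpha> yt z u v yt' s t R \<longleftrightarrow>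
    (\<forall>c\<in>{1..K}. \<forall>i\<in>{1..m}. yt' c i \<in> {0, 1} \<and> yt c i = 2 * yt' c i - 1) \<and>
    (\<forall>i\<in>{1..m}. (\<Sum>c=1..K. yt' c i) = 1) \<and>
    (\<Sum>i=1..m. 1 - (\<Sum>c=1..K. onehot_label y c i * yt' c i)) \<le> real (nat \<lfloor>\<epsilon> * real m\<rfloor>) \<and>
    (\<forall>c\<in>{1..K}. c \<noteq> chat \<longrightarrow> b c \<in> {0, 1}) \<and> (\<Sum>c\<in>{1..K} - {chat}. b c) = 1 \<and>
    (\<forall>c\<in>{1..K}. c \<noteq> chat \<longrightarrow>
       p c \<le> pstar \<and> pstar \<le> p c + (1 - b c) * (2 * (C * (\<Sum>i=1..m. \<bar>Qt i\<bar>)))) \<and>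
    (\<forall>c\<in>{1..K}. p c = (\<Sum>i=1..m. z c i * Qt i)) \<and>
    (\<forall>c\<in>{1..K}. svm_kkt_encoding m C Q (yt c) (\<alpha> c) (z c) (u c) (v c) (s c) (t c) (R c))"
proof -
  have spread: "C * X - - C * X = 2 * (C * X)" for X :: real
    by simp
  show ?thesis
    unfolding milp_feasible_def svm_kkt_encoding_def Let_def spread
    by (simp only: ball_conj_distrib conj_ac)
qed

lemma svm_kkt_encoding_imp_opt:
  assumes sym: "\<forall>i\<in>{1..m}. \<forall>j\<in>{1..m}. Q i j = Q j i" and psd: "\<forall>x. 0 \<le> quad_form m Q x"
    and w: "\<forall>i\<in>{1..m}. \<bar>w i\<bar> = 1" and enc: "svm_kkt_encoding m C Q w \<alpha> z u v s t R"
  shows "\<alpha> \<in> svm_opt_set m C Q w" and "\<forall>i\<in>{1..m}. z i = w i * \<alpha> i"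
proof -
  have z: "z i = w i * \<alpha> i \<and> 0 \<le> \<alpha> i \<and> \<alpha> i \<le> C" if "i \<in> {1..m}" for i
    using enc that signed_product_encoding[of "w i" "\<alpha> i" "z i" C] w
    unfolding svm_kkt_encoding_def by blast
  then show "\<forall>i\<in>{1..m}. z i = w i * \<alpha> i"
    by blast
  have feasible: "svm_dual_feasible m C \<alpha>"
    using z unfolding svm_dual_feasible_def by blast
  have R: "R i j = w i * w j * \<alpha> j" if "i \<in> {1..m}" "j \<in> {1..m}" for i j
  proof -
    have "\<bar>z j\<bar> \<le> C"
      using z[OF that(2)] w that(2) by (simp add: abs_mult)
    then have "R i j = w i * z j"
      using enc that signed_copy_encoding[of "w i" "z j" C "R i j"] w
      unfolding svm_kkt_encoding_def by blast
    then show ?thesis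
      using z[OF that(2)] by simp
  qed
  have "svm_kkt m C Q w \<alpha>"
    unfolding svm_kkt_def
  proof
    fix i assume i: "i \<in> {1..m}"
    have "svm_dual_grad m Q w \<alpha> i = (\<Sum>j=1..m. R i j * Q i j) - 1"
      unfolding svm_dual_grad_def using i R by (intro arg_cong2[where f = "(-)"] sum.cong) auto
    then show "(0 < svm_dual_grad m Q w \<alpha> i \<longrightarrow> \<alpha> i = 0) \<and> (svm_dual_grad m Q w \<alpha> i < 0 \<longrightarrow> \<alpha> i = C)"
      using bspec[OF enc[unfolded svm_kkt_encoding_def] i] z[OF i]
      by (intro complementarity_encoding_sound[of "s i" "t i" _ "u i" "v i"]) auto
  qed
  then show "\<alpha> \<in> svm_opt_set m C Q w"
    by (rule svm_kkt_imp_opt[OF sym psd feasible])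
qed

lemma svm_opt_imp_kkt_encoding:
  assumes sym: "\<forall>i\<in>{1..m}. \<forall>j\<in>{1..m}. Q i j = Q j i"
    and w: "\<forall>i\<in>{1..m}. \<bar>w i\<bar> = 1" and opt: "\<alpha> \<in> svm_opt_set m C Q w"
  defines "g \<equiv> svm_dual_grad m Q w \<alpha>"
  shows "svm_kkt_encoding m C Q w \<alpha> (\<lambda>i. w i * \<alpha> i) (\<lambda>i. max (g i) 0) (\<lambda>i. max (- g i) 0)
           (\<lambda>i. of_bool (0 < g i)) (\<lambda>i. of_bool (g i < 0)) (\<lambda>i j. w i * w j * \<alpha> j)"
proof -
  have feasible: "svm_dual_feasible m C \<alpha>"
    using opt unfolding svm_opt_set_def by blast
  then have \<alpha>: "0 \<le> \<alpha> j \<and> \<alpha> j \<le> C" if "j \<in> {1..m}" for j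
    using that unfolding svm_dual_feasible_def by blast
  have kkt: "(0 < g i \<longrightarrow> \<alpha> i = 0) \<and> (g i < 0 \<longrightarrow> \<alpha> i = C)" if "i \<in> {1..m}" for i
    using svm_opt_imp_kkt[OF sym w opt] that unfolding svm_kkt_def g_def by blast
  have grad: "(\<Sum>j=1..m. w i * w j * \<alpha> j * Q i j) - 1 - max (g i) 0 + max (- g i) 0 = 0" for i
    unfolding g_def svm_dual_grad_def by simp
  have copy: "- C * (1 + w i) \<le> w i * w j * \<alpha> j + w j * \<alpha> j \<and> w i * w j * \<alpha> j + w j * \<alpha> j \<le> C * (1 + w i) \<and>
      - C * (1 - w i) \<le> w i * w j * \<alpha> j - w j * \<alpha> j \<and> w i * w j * \<alpha> j - w j * \<alpha> j \<le> C * (1 - w i)"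
    if "i \<in> {1..m}" "j \<in> {1..m}" for i j
  proof -
    have "\<bar>w j * \<alpha> j\<bar> \<le> C"
      using \<alpha>[OF that(2)] w that(2) by (simp add: abs_mult)
    then show ?thesis
      using signed_copy_encoding[of "w i" "w j * \<alpha> j" C "w i * w j * \<alpha> j"] w that(1) by (simp add: mult.assoc)
  qed
  have product: "- \<alpha> i \<le> w i * \<alpha> i \<and> w i * \<alpha> i \<le> \<alpha> i \<and> \<alpha> i - C * (1 - w i) \<le> w i * \<alpha> i \<and>
      w i * \<alpha> i \<le> C * (1 + w i) - \<alpha> i" if "i \<in> {1..m}" for i
    using signed_product_encoding[of "w i" "\<alpha> i" "w i * \<alpha> i" C] w that \<alpha>[OF that] by simp
  have complementarity: "max (g i) 0 \<le> ((\<Sum>j=1..m. C * \<bar>Q i j\<bar>) - 1) * of_bool (0 < g i) \<and>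
      \<alpha> i \<le> C * (1 - of_bool (0 < g i)) \<and>
      max (- g i) 0 \<le> ((\<Sum>j=1..m. C * \<bar>Q i j\<bar>) + 1) * of_bool (g i < 0) \<and>
      C * of_bool (g i < 0) \<le> \<alpha> i" if "i \<in> {1..m}" for i
  proof (rule complementarity_encoding_complete)
    show "\<bar>g i + 1\<bar> \<le> (\<Sum>j=1..m. C * \<bar>Q i j\<bar>)"
      unfolding g_def by (rule svm_dual_grad_bound[OF feasible w that])
  qed (use kkt[OF that] \<alpha>[OF that] in auto)
  show ?thesis
    unfolding svm_kkt_encoding_def using grad copy product complementarity by simp
qed

lemma class_score_eq:
  assumes sym: "\<forall>i\<in>{1..m}. \<forall>j\<in>{1..m}. Q i j = Q j i" and psd: "psd_with_test m Q Qt"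
    and C: "0 \<le> C" and opt: "\<alpha> \<in> svm_opt_set m C Q (bin_label L c)"
  shows "class_score m C Q Qt L c = (\<Sum>i=1..m. bin_label L c i * \<alpha> i * Qt i)"
  unfolding class_score_def Let_def
  using svm_opt_score_unique[OF sym psd _ opt] someI_ex[OF svm_opt_set_nonempty[OF C]] by blast

lemma score_margin_eq:
  "score_margin K m C Q Qt chat L
     = class_score m C Q Qt L chat - Max (class_score m C Q Qt L ` ({1..K} - {chat}))"
proof -
  have "{class_score m C Q Qt L c | c. c \<in> {1..K} \<and> c \<noteq> chat} = class_score m C Q Qt L ` ({1..K} - {chat})"
    by auto
  then show ?thesis
    unfolding score_margin_def by simp
qed

lemma adv_set_finite:
  assumes "\<forall>i\<in>{1..m}. y i \<in> {1..K}"
  shows "finite (adv_set K m \<epsilon> y)"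
proof -
  have "inj_on (\<lambda>L. restrict L {1..m}) (adv_set K m \<epsilon> y)"
  proof (rule inj_onI)
    fix L L' assume L: "L \<in> adv_set K m \<epsilon> y" "L' \<in> adv_set K m \<epsilon> y"
      and restrict: "restrict L {1..m} = restrict L' {1..m}"
    show "L = L'"
    proof
      fix i
      show "L i = L' i"
        using L fun_cong[OF restrict, of i] unfolding adv_set_def by (cases "i \<in> {1..m}") auto
    qed
  qed
  moreover have "(\<lambda>L. restrict L {1..m}) ` adv_set K m \<epsilon> y \<subseteq> PiE {1..m} (\<lambda>_. {1..K})"
    unfolding adv_set_def by auto
  then have "finite ((\<lambda>L. restrict L {1..m}) ` adv_set K m \<epsilon> y)"
    by (rule finite_subset) (simp add: finite_PiE)
  ultimately show ?thesis
    by (rule finite_imageD[rotated])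
qed

lemma self_in_adv_set:
  assumes "\<forall>i\<in>{1..m}. y i \<in> {1..K}"
  shows "y \<in> adv_set K m \<epsilon> y"
  using assms unfolding adv_set_def by simp

context
  fixes K m :: nat and C \<epsilon> :: real and y :: "nat \<Rightarrow> nat"
    and Q :: "nat \<Rightarrow> nat \<Rightarrow> real" and Qt :: "nat \<Rightarrow> real" and chat :: nat
  assumes K: "2 \<le> K" and C: "0 < C" and y: "\<forall>i\<in>{1..m}. y i \<in> {1..K}"
    and sym: "\<forall>i\<in>{1..m}. \<forall>j\<in>{1..m}. Q i j = Q j i" and psd: "psd_with_test m Q Qt"
    and chat: "chat \<in> {1..K}"
begin

lemma milp_value_is_margin:
  assumes "milp_feasible K m C Q Qt \<epsilon> y chat pstar p b \<alpha> yt z u v yt' s t R"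
  obtains L where "L \<in> adv_set K m \<epsilon> y" and "p chat - pstar = score_margin K m C Q Qt chat L"
proof -
  have labels: "\<forall>c\<in>{1..K}. \<forall>i\<in>{1..m}. yt' c i \<in> {0, 1} \<and> yt c i = 2 * yt' c i - 1"
    and columns: "\<forall>i\<in>{1..m}. (\<Sum>c=1..K. yt' c i) = 1"
    and budget: "(\<Sum>i=1..m. 1 - (\<Sum>c=1..K. onehot_label y c i * yt' c i)) \<le> real (nat \<lfloor>\<epsilon> * real m\<rfloor>)"
    and selection: "\<forall>c\<in>{1..K}. c \<noteq> chat \<longrightarrow> b c \<in> {0, 1}" "(\<Sum>c\<in>{1..K} - {chat}. b c) = 1"
      "\<forall>c\<in>{1..K}. c \<noteq> chat \<longrightarrow>
         p c \<le> pstar \<and> pstar \<le> p c + (1 - b c) * (2 * (C * (\<Sum>i=1..m. \<bar>Qt i\<bar>)))"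
    and scores: "\<forall>c\<in>{1..K}. p c = (\<Sum>i=1..m. z c i * Qt i)"
    and encodings: "\<forall>c\<in>{1..K}. svm_kkt_encoding m C Q (yt c) (\<alpha> c) (z c) (u c) (v c) (s c) (t c) (R c)"
    using assms unfolding milp_feasible_iff by blast+
  obtain L where L: "\<forall>i\<in>{1..m}. L i \<in> {1..K}" "\<forall>i. i \<notin> {1..m} \<longrightarrow> L i = y i"
    and onehot: "\<forall>c\<in>{1..K}. \<forall>i\<in>{1..m}. yt' c i = onehot_label L c i"
    using onehot_matrix_eq_labels[of K m yt'] labels columns by blast
  have yt: "yt c i = bin_label L c i" if "c \<in> {1..K}" "i \<in> {1..m}" for c i
    using labels onehot that by (simp add: bin_label_eq_onehot)
  have "(\<Sum>i=1..m. 1 - (\<Sum>c=1..K. onehot_label y c i * yt' c i))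
      = (\<Sum>i=1..m. 1 - (\<Sum>c=1..K. onehot_label y c i * onehot_label L c i))"
    using onehot by (intro sum.cong arg_cong2[where f = "(-)"]) auto
  then have "card {i\<in>{1..m}. L i \<noteq> y i} \<le> nat \<lfloor>\<epsilon> * real m\<rfloor>"
    using budget onehot_disagreement_sum[OF y] by simp
  with L have L_adv: "L \<in> adv_set K m \<epsilon> y"
    unfolding adv_set_def by blast
  have p_score: "p c = class_score m C Q Qt L c" if c: "c \<in> {1..K}" for c
  proof -
    have w: "\<forall>i\<in>{1..m}. \<bar>yt c i\<bar> = 1"
      using yt[OF c] by simp
    have "svm_kkt_encoding m C Q (yt c) (\<alpha> c) (z c) (u c) (v c) (s c) (t c) (R c)"
      using encodings c ..
    note solution = svm_kkt_encoding_imp_opt[OF sym psd_with_test_imp_psd[OF psd] w this]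
    have "\<alpha> c \<in> svm_opt_set m C Q (bin_label L c)"
      using solution(1) svm_opt_set_cong[OF yt[OF c]] by simp
    moreover have "p c = (\<Sum>i=1..m. bin_label L c i * \<alpha> c i * Qt i)"
      using scores c solution(2) yt[OF c] by simp
    ultimately show ?thesis
      using class_score_eq[OF sym psd] C by simp
  qed
  have "pstar = Max (p ` ({1..K} - {chat}))"
    using selection by (intro max_selection_sound[of _ b _ _ "2 * (C * (\<Sum>i=1..m. \<bar>Qt i\<bar>))"]) auto
  moreover have "p ` ({1..K} - {chat}) = class_score m C Q Qt L ` ({1..K} - {chat})"
    using p_score by (intro image_cong) auto
  ultimately have "p chat - pstar = score_margin K m C Q Qt chat L"
    unfolding score_margin_eq using p_score chat by simp
  with L_adv show thesis
    by (rule that)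
qed

lemma margin_is_milp_value:
  assumes L_adv: "L \<in> adv_set K m \<epsilon> y"
  shows "score_margin K m C Q Qt chat L \<in> milp_values K m C Q Qt \<epsilon> y chat"
proof -
  have L: "\<forall>i\<in>{1..m}. L i \<in> {1..K}" "card {i\<in>{1..m}. L i \<noteq> y i} \<le> nat \<lfloor>\<epsilon> * real m\<rfloor>"
    using L_adv unfolding adv_set_def by auto
  define \<alpha> where "\<alpha> c = (SOME \<alpha>. \<alpha> \<in> svm_opt_set m C Q (bin_label L c))" for c
  have opt: "\<alpha> c \<in> svm_opt_set m C Q (bin_label L c)" for c
    unfolding \<alpha>_def using C by (intro someI_ex[OF svm_opt_set_nonempty]) simp
  define p where "p c = class_score m C Q Qt L c" for c
  have p: "p c = (\<Sum>i=1..m. bin_label L c i * \<alpha> c i * Qt i)" for c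
    unfolding p_def using class_score_eq[OF sym psd _ opt] C by simp
  define S where "S = {1..K} - {chat}"
  have "1 \<in> S \<or> 2 \<in> S"
    using K unfolding S_def by auto
  then have S: "finite S" "S \<noteq> {}"
    unfolding S_def by blast+
  have "\<bar>p c\<bar> \<le> C * (\<Sum>i=1..m. \<bar>Qt i\<bar>)" for c
    unfolding p using opt[of c] by (intro svm_score_bound) (auto simp: svm_opt_set_def)
  then obtain b where b: "\<forall>c\<in>S. b c \<in> {0, 1}" "(\<Sum>c\<in>S. b c) = 1"
    "\<forall>c\<in>S. p c \<le> Max (p ` S) \<and> Max (p ` S) \<le> p c + (1 - b c) * (2 * (C * (\<Sum>i=1..m. \<bar>Qt i\<bar>)))"
    using max_selection_complete[OF S] by blast
  define g where "g c = svm_dual_grad m Q (bin_label L c) (\<alpha> c)" for c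
  have "milp_feasible K m C Q Qt \<epsilon> y chat (Max (p ` S)) p b \<alpha> (bin_label L)
      (\<lambda>c i. bin_label L c i * \<alpha> c i) (\<lambda>c i. max (g c i) 0) (\<lambda>c i. max (- g c i) 0)
      (onehot_label L) (\<lambda>c i. of_bool (0 < g c i)) (\<lambda>c i. of_bool (g c i < 0))
      (\<lambda>c i j. bin_label L c i * bin_label L c j * \<alpha> c j)"
    unfolding milp_feasible_iff
  proof (intro conjI)
    show "\<forall>c\<in>{1..K}. \<forall>i\<in>{1..m}. onehot_label L c i \<in> {0, 1} \<and> bin_label L c i = 2 * onehot_label L c i - 1"
      by (simp add: onehot_label_def bin_label_eq_onehot)
    show "\<forall>i\<in>{1..m}. (\<Sum>c=1..K. onehot_label L c i) = 1"
      using L(1) onehot_label_sum by blast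
    show "(\<Sum>i=1..m. 1 - (\<Sum>c=1..K. onehot_label y c i * onehot_label L c i)) \<le> real (nat \<lfloor>\<epsilon> * real m\<rfloor>)"
      unfolding onehot_disagreement_sum[OF y] using L(2) by simp
    show "\<forall>c\<in>{1..K}. c \<noteq> chat \<longrightarrow> b c \<in> {0, 1}" "(\<Sum>c\<in>{1..K} - {chat}. b c) = 1"
      "\<forall>c\<in>{1..K}. c \<noteq> chat \<longrightarrow>
         p c \<le> Max (p ` S) \<and> Max (p ` S) \<le> p c + (1 - b c) * (2 * (C * (\<Sum>i=1..m. \<bar>Qt i\<bar>)))"
      using b unfolding S_def by auto
    show "\<forall>c\<in>{1..K}. p c = (\<Sum>i=1..m. bin_label L c i * \<alpha> c i * Qt i)"
      using p by blast
    show "\<forall>c\<in>{1..K}. svm_kkt_encoding m C Q (bin_label L c) (\<alpha> c) (\<lambda>i. bin_label L c i * \<alpha> c i)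
        (\<lambda>i. max (g c i) 0) (\<lambda>i. max (- g c i) 0) (\<lambda>i. of_bool (0 < g c i)) (\<lambda>i. of_bool (g c i < 0))
        (\<lambda>i j. bin_label L c i * bin_label L c j * \<alpha> c j)"
      unfolding g_def using svm_opt_imp_kkt_encoding[OF sym _ opt] by simp
  qed
  moreover have "score_margin K m C Q Qt chat L = p chat - Max (p ` S)"
    unfolding score_margin_eq p_def S_def ..
  ultimately show ?thesis
    unfolding milp_values_def by blast
qed

lemma milp_values_eq_margins:
  "milp_values K m C Q Qt \<epsilon> y chat = score_margin K m C Q Qt chat ` adv_set K m \<epsilon> y"
proof
  show "milp_values K m C Q Qt \<epsilon> y chat \<subseteq> score_margin K m C Q Qt chat ` adv_set K m \<epsilon> y"
    unfolding milp_values_def by (auto elim!: milp_value_is_margin)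
  show "score_margin K m C Q Qt chat ` adv_set K m \<epsilon> y \<subseteq> milp_values K m C Q Qt \<epsilon> y chat"
    using margin_is_milp_value by blast
qed

end

theorem theorem3:
  fixes K m :: nat and C \<epsilon> :: real and y :: "nat \<Rightarrow> nat"
    and Q :: "nat \<Rightarrow> nat \<Rightarrow> real" and Qt :: "nat \<Rightarrow> real" and chat :: nat
  assumes "K \<ge> 2" and "m \<ge> 1" and "C > 0" and "0 \<le> \<epsilon>" and "\<epsilon> \<le> 1"
    and "\<forall>i\<in>{1..m}. y i \<in> {1..K}"
    and "\<forall>i\<in>{1..m}. \<forall>j\<in>{1..m}. Q i j = Q j i"
    and "\<exists>Qtt::real. \<forall>(x::nat \<Rightarrow> real) (x0::real).
           x0 * x0 * Qtt + 2 * x0 * (\<Sum>i=1..m. x i * Qt i)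
           + (\<Sum>i=1..m. \<Sum>j=1..m. x i * x j * Q i j) \<ge> 0"
    and "chat \<in> {1..K}"
    and "\<forall>c\<in>{1..K}. class_score m C Q Qt y c \<le> class_score m C Q Qt y chat"
  shows "\<exists>opt. opt \<in> milp_values K m C Q Qt \<epsilon> y chat
           \<and> (\<forall>v\<in>milp_values K m C Q Qt \<epsilon> y chat. opt \<le> v)
           \<and> opt = (MIN yt\<in>adv_set K m \<epsilon> y. score_margin K m C Q Qt chat yt)
           \<and> (certifiably_robust K m C Q Qt \<epsilon> y chat \<longleftrightarrow> opt > 0)"
proof -
  have "psd_with_test m Q Qt"
    using assms(8) unfolding psd_with_test_def quad_form_def .
  then have margins: "milp_values K m C Q Qt \<epsilon> y chat = score_margin K m C Q Qt chat ` adv_set K m \<epsilon> y"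
    using milp_values_eq_margins assms(1,3,6,7,9) by blast
  have "finite (score_margin K m C Q Qt chat ` adv_set K m \<epsilon> y)"
    "score_margin K m C Q Qt chat ` adv_set K m \<epsilon> y \<noteq> {}"
    using adv_set_finite[OF assms(6)] self_in_adv_set[OF assms(6)] by auto
  then show ?thesis
    unfolding margins certifiably_robust_def by (intro exI[of _ "MIN yt\<in>adv_set K m \<epsilon> y. score_margin K m C Q Qt chat yt"]) auto
qed

end
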